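(* Let $a,b\in\mathbb{Q}_3$ with $\gamma(a)=1$, $\gamma(b)=0$, and let $x=\sum_{k\ge0}x_k3^k\in\mathbb{Z}_3^*$ be such that $A_0=x_0^2+a_0\not\equiv0\pmod3$. Then $x$ is a solution of $x^3+ax=b$ if and only if the congruences $$x_0^3\equiv b_0\pmod3,$$ $$x_0a_0+M_1(x_0)\equiv b_1\pmod3,$$ $$(x_0^2+a_0)x_{k-1}+x_{k-2}a_1+\dots+x_0a_{k-1}+N'_k(x_0,\dots,x_{k-2})+M_k(x_0,\dots,x_{k-2})\equiv b_k\pmod3,\quad k\ge2,$$ are fulfilled, where $M_1(x_0)=\frac{x_0^3-b_0}{3}$ and the integers $M_k(x_0,\dots,x_{k-2})$, $k\ge2$, are defined by $$x_0a_0+M_1(x_0)=b_1+3M_2(x_0),$$ $$(x_0^2+a_0)x_{k-1}+N'_k(x_0,\dots,x_{k-2})+x_{k-2}a_1+\dots+x_0a_{k-1}+M_k(x_0,\dots,x_{k-2})=b_k+3M_{k+1}(x_0,\dots,x_{k-1}),\quad k\ge2.$$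
   Context: Write $a=3^{\gamma(a)}(a_0+a_13+a_23^2+\dots)$, $b=3^{\gamma(b)}(b_0+b_13+b_23^2+\dots)$ in canonical form, with digits $a_j,b_j\in\{0,1,2\}$, $a_0,b_0\ne0$, $\gamma(a),\gamma(b)\in\mathbb{Z}$. $\mathbb{Z}_3^*$ is the set of $3$-adic units; $x\in\mathbb{Z}_3^*$ is written $x=x_0+x_13+x_23^2+\dots$ with $x_j\in\{0,1,2\}$, $x_0\ne0$. For $k\ge1$, $N_k(x_0,\dots,x_{k-1})=\sum \frac{3!}{m_0!\cdots m_{k-1}!}x_0^{m_0}\cdots x_{k-1}^{m_{k-1}}$, the sum over nonnegative integers $m_0,\dots,m_{k-1}$ with $\sum_{i=0}^{k-1}m_i=3$ and $\sum_{i=1}^{k-1}im_i=k$ (so $N_1=0$). Define, for $s$ a positive integer, $$N'_j=\begin{cases}\frac{N_{j-1}}{3}, & j=3s-1,\\ \frac{N_{j-1}}{3}+x_{j/3}^3, & j=3s,\\ \frac{N_{j-1}-x_{(j-1)/3}^3}{3}, & j=3s+1.\end{cases}$$ *)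

theory Defs
  imports "HOL-Library.FuncSet" "HOL-Number_Theory.Cong"
begin

text \<open>3-adic digit sequences: a digit sequence d represents sum_j d j * 3^j.\<close>

definition digits3 :: "(nat \<Rightarrow> int) \<Rightarrow> bool" where
  "digits3 d \<longleftrightarrow> (\<forall>j. 0 \<le> d j \<and> d j \<le> 2)"

definition trunc3 :: "(nat \<Rightarrow> int) \<Rightarrow> nat \<Rightarrow> int" where
  "trunc3 d n = (\<Sum>j<n. d j * 3 ^ j)"

text \<open>x is a solution of x^3 + a x = b in Q_3, where a = 3 * (a_0 + a_1 3 + ...)
  (gamma(a) = 1) and b = b_0 + b_1 3 + ... (gamma(b) = 0). Equality in Z_3 is
  equality of all truncations modulo 3^n.\<close>
definition is_solution3 :: "(nat \<Rightarrow> int) \<Rightarrow> (nat \<Rightarrow> int) \<Rightarrow> (nat \<Rightarrow> int) \<Rightarrow> bool" where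
  "is_solution3 a b x \<longleftrightarrow>
     (\<forall>n. [trunc3 x n ^ 3 + 3 * trunc3 a n * trunc3 x n = trunc3 b n] (mod 3 ^ n))"

definition Nk :: "nat \<Rightarrow> (nat \<Rightarrow> int) \<Rightarrow> int" where
  "Nk k x = (\<Sum>m \<in> {m \<in> {0..<k} \<rightarrow>\<^sub>E {0..3::nat}.
                  (\<Sum>i<k. m i) = 3 \<and> (\<Sum>i\<in>{1..<k}. i * m i) = k}.
      int (fact 3 div (\<Prod>i<k. fact (m i))) * (\<Prod>i<k. x i ^ m i))"

text \<open>N'_j (for j \<ge> 2); the divisions are exact.\<close>
definition Nprime :: "nat \<Rightarrow> (nat \<Rightarrow> int) \<Rightarrow> int" where
  "Nprime j x =
     (if j mod 3 = 2 then Nk (j - 1) x div 3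
      else if j mod 3 = 0 then Nk (j - 1) x div 3 + x (j div 3) ^ 3
      else (Nk (j - 1) x - x ((j - 1) div 3) ^ 3) div 3)"

definition Lhs :: "(nat \<Rightarrow> int) \<Rightarrow> (nat \<Rightarrow> int) \<Rightarrow> nat \<Rightarrow> int \<Rightarrow> int" where
  "Lhs a x k m =
     (if k = 1 then x 0 * a 0 + m
      else (x 0 ^ 2 + a 0) * x (k - 1) + (\<Sum>i\<in>{1..<k}. x (k - 1 - i) * a i)
           + Nprime k x + m)"

text \<open>The carries M_k (k \<ge> 1); M_0 is unused.\<close>
fun Mk :: "(nat \<Rightarrow> int) \<Rightarrow> (nat \<Rightarrow> int) \<Rightarrow> (nat \<Rightarrow> int) \<Rightarrow> nat \<Rightarrow> int" where
  "Mk a b x 0 = 0"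
| "Mk a b x (Suc 0) = (x 0 ^ 3 - b 0) div 3"
| "Mk a b x (Suc (Suc k)) = (Lhs a x (Suc k) (Mk a b x (Suc k)) - b (Suc k)) div 3"

end

theory Submission
  imports Defs "HOL-Computational_Algebra.Polynomial"
begin

text \<open>Truncating at 3^n, x^3 + a x is the value at 3 of the integer polynomial
  D_x^3 + X D_a D_x, where D_d = sum_{i<n} d_i X^i. By the multinomial theorem the k-th coefficient
  of D_x^3 is N_k + 3 x_0^2 x_k, and by the Frobenius congruence (u + v)^3 = u^3 + v^3 mod 3 we have
  N_k = x_{k/3}^3 mod 3. Moving the multiples of 3 of each coefficient to the next digit turns the
  coefficient sum into sum_j 3^j L_j, where L_j is the carry-free left-hand side of the j-th
  congruence. The equation holds modulo every 3^n iff the carries M_k of the digit sum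
  sum_j 3^j (L_j - b_j) leave no remainder at any digit, which are exactly the stated congruences.\<close>

lemma fact_prod_dvd_fact_sum:
  "finite I \<Longrightarrow> (\<Prod>i\<in>I. fact (m i)) dvd (fact (sum m I) :: nat)"
proof (induction I rule: finite_induct)
  case empty then show ?case by simp
next
  case (insert a I)
  have "fact (m a) * (\<Prod>i\<in>I. fact (m i)) dvd (fact (m a) * fact (sum m I) :: nat)"
    using insert by (simp add: mult_dvd_mono)
  also have "\<dots> dvd fact (m a + sum m I)" by (rule fact_fact_dvd_fact)
  finally show ?case using insert by simp
qed

lemma multinomial_coeff_split:
  assumes "finite I" and "j \<le> c" and "sum m I = c - j"
  shows "fact c div (fact j * (\<Prod>i\<in>I. fact (m i))) =
         (c choose j) * (fact (c - j) div (\<Prod>i\<in>I. fact (m i)) :: nat)"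
proof -
  obtain q where q: "fact (c - j) = (\<Prod>i\<in>I. fact (m i)) * (q :: nat)"
    using fact_prod_dvd_fact_sum[OF assms(1), of m] assms(3) by (metis dvdE)
  have pos: "(\<Prod>i\<in>I. fact (m i) :: nat) > 0" by (simp add: prod_pos)
  have "fact c = (c choose j) * q * (fact j * (\<Prod>i\<in>I. fact (m i)))"
    using binomial_fact_lemma[OF assms(2)] q by (simp add: algebra_simps)
  then show ?thesis using q pos by simp
qed

definition multi_exponents :: "'b set \<Rightarrow> nat \<Rightarrow> ('b \<Rightarrow> nat) set" where
  "multi_exponents I c = {m \<in> I \<rightarrow>\<^sub>E {0..c}. sum m I = c}"

lemma finite_multi_exponents: "finite I \<Longrightarrow> finite (multi_exponents I c)"
  by (auto simp: multi_exponents_def intro!: finite_PiE)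

lemma multi_exponents_empty:
  "multi_exponents {} c = (if c = 0 then {\<lambda>_. undefined} else {})"
  by (auto simp: multi_exponents_def)

lemma bij_betw_multi_exponents_insert:
  assumes "finite I" and "a \<notin> I"
  shows "bij_betw (\<lambda>(j, m'). m'(a := j)) (Sigma {..c} (\<lambda>j. multi_exponents I (c - j)))
                  (multi_exponents (insert a I) c)"
proof (rule bij_betw_byWitness[where f' = "\<lambda>m. (m a, m(a := undefined))"])
  have on_I: "sum (m'(a := j)) I = sum m' I" for m' and j :: nat
    using assms by (auto intro!: sum.cong)
  show "\<forall>p\<in>Sigma {..c} (\<lambda>j. multi_exponents I (c - j)).
          (\<lambda>m. (m a, m(a := undefined))) ((\<lambda>(j, m'). m'(a := j)) p) = p"
    using assms by (auto simp: multi_exponents_def PiE_def extensional_def)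
  show "(\<lambda>(j, m'). m'(a := j)) ` (Sigma {..c} (\<lambda>j. multi_exponents I (c - j)))
          \<subseteq> multi_exponents (insert a I) c"
    using assms on_I
    by (auto simp: multi_exponents_def PiE_def Pi_def extensional_def) (metis diff_le_self le_trans)
  show "\<forall>m\<in>multi_exponents (insert a I) c. (\<lambda>(j, m'). m'(a := j)) (m a, m(a := undefined)) = m"
    by simp
  show "(\<lambda>m. (m a, m(a := undefined))) ` multi_exponents (insert a I) c
          \<subseteq> (Sigma {..c} (\<lambda>j. multi_exponents I (c - j)))"
  proof (rule image_subsetI)
    fix m assume m: "m \<in> multi_exponents (insert a I) c"
    then have "m a + sum m I = c" using assms by (simp add: multi_exponents_def)
    moreover have "m x \<le> sum m I" if "x \<in> I" for x
      using that assms(1) by (intro member_le_sum) auto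
    ultimately show "(m a, m(a := undefined)) \<in> (Sigma {..c} (\<lambda>j. multi_exponents I (c - j)))"
      using m assms on_I[of m undefined]
      by (fastforce simp: multi_exponents_def PiE_def Pi_def extensional_def)
  qed
qed

lemma multinomial_theorem:
  fixes y :: "'b \<Rightarrow> 'a::comm_ring_1"
  assumes "finite I"
  shows "(\<Sum>i\<in>I. y i) ^ c = (\<Sum>m\<in>multi_exponents I c.
           of_nat (fact c div (\<Prod>i\<in>I. fact (m i))) * (\<Prod>i\<in>I. y i ^ m i))"
  using assms
proof (induction I arbitrary: c rule: finite_induct)
  case empty
  show ?case by (simp add: multi_exponents_empty power_0_left)
next
  case (insert a I)
  let ?t = "\<lambda>J m. of_nat (fact c div (\<Prod>i\<in>J. fact (m i))) * (\<Prod>i\<in>J. y i ^ m i)"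
  let ?g = "\<lambda>(j, m'). of_nat (c choose j) * y a ^ j *
              (of_nat (fact (c - j) div (\<Prod>i\<in>I. fact (m' i))) * (\<Prod>i\<in>I. y i ^ m' i))"
  have "(\<Sum>i\<in>insert a I. y i) ^ c = (\<Sum>j\<le>c. of_nat (c choose j) * y a ^ j * (\<Sum>i\<in>I. y i) ^ (c - j))"
    using insert by (simp add: binomial_ring)
  also have "\<dots> = (\<Sum>j\<le>c. \<Sum>m'\<in>multi_exponents I (c - j). ?g (j, m'))"
    by (simp add: insert.IH sum_distrib_left)
  also have "\<dots> = (\<Sum>p\<in>Sigma {..c} (\<lambda>j. multi_exponents I (c - j)). ?g p)"
    using insert by (subst sum.Sigma) (auto simp: finite_multi_exponents split_def)
  also have "\<dots> = (\<Sum>p\<in>Sigma {..c} (\<lambda>j. multi_exponents I (c - j)). ?t (insert a I) (case p of (j, m') \<Rightarrow> m'(a := j)))"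
  proof (rule sum.cong[OF refl])
    fix p assume "p \<in> Sigma {..c} (\<lambda>j. multi_exponents I (c - j))"
    then obtain j m' where p: "p = (j, m')" and j: "j \<le> c" and m': "m' \<in> multi_exponents I (c - j)"
      by blast
    have "(\<Prod>i\<in>I. fact ((m'(a := j)) i)) = (\<Prod>i\<in>I. fact (m' i) :: nat)"
         "(\<Prod>i\<in>I. y i ^ (m'(a := j)) i) = (\<Prod>i\<in>I. y i ^ m' i)"
      using insert by (auto intro!: prod.cong)
    moreover have "sum m' I = c - j" using m' by (simp add: multi_exponents_def)
    ultimately show "?g p = ?t (insert a I) (case p of (j, m') \<Rightarrow> m'(a := j))"
      using p insert multinomial_coeff_split[OF insert(1) j] by (simp add: algebra_simps)
  qed
  also have "\<dots> = (\<Sum>m\<in>multi_exponents (insert a I) c. ?t (insert a I) m)"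
    by (rule sum.reindex_bij_betw[OF bij_betw_multi_exponents_insert[OF insert(1,2)]])
  finally show ?case .
qed

definition digits_poly :: "(nat \<Rightarrow> int) \<Rightarrow> nat \<Rightarrow> int poly" where
  "digits_poly d n = (\<Sum>i<n. monom (d i) i)"

lemma coeff_digits_poly: "coeff (digits_poly d n) i = (if i < n then d i else 0)"
  by (simp add: digits_poly_def coeff_sum coeff_monom)

lemma poly_digits_poly_3: "poly (digits_poly d n) 3 = trunc3 d n"
  by (simp add: digits_poly_def poly_sum poly_monom trunc3_def)

lemma digits_poly_Suc: "digits_poly d (Suc n) = digits_poly d n + monom (d n) n"
  by (simp add: digits_poly_def)

lemma prod_monom:
  "finite I \<Longrightarrow> (\<Prod>i\<in>I. monom (f i) (g i)) = monom (\<Prod>i\<in>I. f i) (\<Sum>i\<in>I. g i)"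
  by (induction I rule: finite_induct) (simp_all add: mult_monom monom_0 one_pCons)

lemma Nk_eq_coeff_cube: "Nk k x = coeff (digits_poly x k ^ 3) k"
proof -
  let ?c = "\<lambda>m. int (fact 3 div (\<Prod>i<k. fact (m i))) * (\<Prod>i<k. x i ^ m i)"
  have "digits_poly x k ^ 3 = (\<Sum>m\<in>multi_exponents {..<k} 3. monom (?c m) (\<Sum>i<k. i * m i))"
    unfolding digits_poly_def multinomial_theorem[OF finite_lessThan]
    by (rule sum.cong) (simp_all add: monom_power prod_monom of_nat_mult_conv_smult
                                      smult_monom mult.commute)
  then have "coeff (digits_poly x k ^ 3) k =
             (\<Sum>m\<in>{m\<in>multi_exponents {..<k} 3. (\<Sum>i<k. i * m i) = k}. ?c m)"
    by (simp add: coeff_sum coeff_monom eq_commute sum.inter_filter finite_multi_exponents)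
  also have "{m\<in>multi_exponents {..<k} 3. (\<Sum>i<k. i * m i) = k} =
      {m \<in> {0..<k} \<rightarrow>\<^sub>E {0..3}. (\<Sum>i<k. m i) = 3 \<and> (\<Sum>i\<in>{1..<k}. i * m i) = k}"
  proof -
    have "(\<Sum>i<k. i * m i) = (\<Sum>i\<in>{1..<k}. i * m i)" for m :: "nat \<Rightarrow> nat"
      by (rule sum.mono_neutral_right) auto
    then show ?thesis by (auto simp: multi_exponents_def atLeast0LessThan)
  qed
  finally show ?thesis by (simp add: Nk_def)
qed

lemma Nk_0: "Nk 0 x = 0"
  by (simp add: Nk_eq_coeff_cube digits_poly_def)

lemma cube_digits_poly_mod_3:
  "\<exists>r. digits_poly d n ^ 3 = (\<Sum>i<n. monom (d i ^ 3) (3 * i)) + smult 3 r"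
proof (induction n)
  case 0 then show ?case by (auto simp: digits_poly_def)
next
  case (Suc n)
  then obtain r where r: "digits_poly d n ^ 3 = (\<Sum>i<n. monom (d i ^ 3) (3 * i)) + smult 3 r"
    by blast
  let ?p = "digits_poly d n" and ?m = "monom (d n) n"
  have "(?p + ?m) ^ 3 = ?p ^ 3 + ?m ^ 3 + smult 3 (?p\<^sup>2 * ?m + ?p * ?m\<^sup>2)"
    unfolding numeral_mult_conv_smult[symmetric]
    by (simp add: power3_eq_cube power2_eq_square algebra_simps)
  moreover have "?m ^ 3 = monom (d n ^ 3) (3 * n)" by (simp add: monom_power mult.commute)
  ultimately show ?case using r
    by (intro exI[of _ "r + (?p\<^sup>2 * ?m + ?p * ?m\<^sup>2)"])
       (simp add: digits_poly_Suc smult_add_right algebra_simps)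
qed

definition cube_digit :: "(nat \<Rightarrow> int) \<Rightarrow> nat \<Rightarrow> int" where
  "cube_digit d k = (if 3 dvd k \<and> k \<noteq> 0 then d (k div 3) ^ 3 else 0)"

lemma coeff_sum_cubes: "coeff (\<Sum>i<n. monom (d i ^ 3) (3 * i)) n = cube_digit d n"
proof -
  have "coeff (\<Sum>i<n. monom (d i ^ 3) (3 * i)) n = (\<Sum>i<n. if 3 * i = n then d i ^ 3 else 0)"
    by (simp add: coeff_sum coeff_monom)
  also have "\<dots> = cube_digit d n"
  proof (cases "3 dvd n")
    case True then show ?thesis by (auto simp: cube_digit_def sum.delta' elim!: dvdE)
  next
    case False then show ?thesis by (auto simp: cube_digit_def intro!: sum.neutral)
  qed
  finally show ?thesis .
qed

definition Nk_quot :: "(nat \<Rightarrow> int) \<Rightarrow> nat \<Rightarrow> int" where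
  "Nk_quot x k = (Nk k x - cube_digit x k) div 3"

lemma Nk_eq_cube_digit: "Nk k x = cube_digit x k + 3 * Nk_quot x k"
proof -
  obtain r where "digits_poly x k ^ 3 = (\<Sum>i<k. monom (x i ^ 3) (3 * i)) + smult 3 r"
    using cube_digits_poly_mod_3 by blast
  then have "Nk k x = cube_digit x k + 3 * coeff r k"
    by (simp add: Nk_eq_coeff_cube coeff_sum_cubes)
  then show ?thesis by (simp add: Nk_quot_def)
qed

lemma Nprime_eq:
  assumes "2 \<le> n" shows "Nprime n x = Nk_quot x (n - 1) + cube_digit x n"
proof -
  have N: "Nk (n - 1) x = cube_digit x (n - 1) + 3 * Nk_quot x (n - 1)"
    by (rule Nk_eq_cube_digit)
  consider "n mod 3 = 2" | "n mod 3 = 0" | "n mod 3 = 1" by linarith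
  then show ?thesis
  proof cases
    case 1
    then have "\<not> 3 dvd (n - 1)" "\<not> 3 dvd n" using assms by presburger+
    then show ?thesis using 1 N by (simp add: Nprime_def cube_digit_def)
  next
    case 2
    then have "\<not> 3 dvd (n - 1)" "3 dvd n" using assms by presburger+
    then show ?thesis using 2 N assms by (simp add: Nprime_def cube_digit_def)
  next
    case 3
    then have "3 dvd (n - 1)" "\<not> 3 dvd n" "n - 1 \<noteq> 0" using assms by presburger+
    then show ?thesis using 3 N assms by (simp add: Nprime_def cube_digit_def)
  qed
qed

lemma coeff_mult_low_cong:
  assumes "\<forall>i\<le>j. coeff p i = coeff p' i" and "\<forall>i\<le>j. coeff q i = coeff q' i"
  shows "\<forall>i\<le>j. coeff (p * q) i = coeff (p' * q') i"
  using assms by (auto simp: coeff_mult intro!: sum.cong)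

lemma coeff_cube_digits_poly:
  assumes "j < n"
  shows "coeff (digits_poly x n ^ 3) j = (if j = 0 then x 0 ^ 3 else Nk j x + 3 * x 0 ^ 2 * x j)"
proof -
  have "\<forall>i\<le>j. coeff (digits_poly x n) i = coeff (digits_poly x (Suc j)) i"
    using assms by (simp add: coeff_digits_poly)
  then have "\<forall>i\<le>j. coeff (digits_poly x n ^ 3) i = coeff (digits_poly x (Suc j) ^ 3) i"
    unfolding power3_eq_cube by (intro coeff_mult_low_cong)
  then have low: "coeff (digits_poly x n ^ 3) j = coeff (digits_poly x (Suc j) ^ 3) j" by simp
  let ?p = "digits_poly x j" and ?m = "monom (x j) j"
  have "(?p + ?m) ^ 3 = ?p ^ 3 + smult 3 (?m * ?p\<^sup>2) + smult 3 (monom (x j ^ 2) (j * 2) * ?p)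
                        + monom (x j ^ 3) (j * 3)"
    unfolding numeral_mult_conv_smult[symmetric] monom_power[symmetric]
    by (simp add: power3_eq_cube power2_eq_square algebra_simps)
  then have "coeff (digits_poly x (Suc j) ^ 3) j = Nk j x + 3 * (x j * coeff (?p\<^sup>2) 0) +
      3 * (if j < j * 2 then 0 else x j ^ 2 * coeff ?p (j - j * 2)) + (if j * 3 = j then x j ^ 3 else 0)"
    by (simp add: digits_poly_Suc coeff_monom_mult Nk_eq_coeff_cube coeff_monom)
  moreover have "coeff (?p\<^sup>2) 0 = (if j = 0 then 0 else x 0 ^ 2)"
    by (simp add: power2_eq_square coeff_mult_0 coeff_digits_poly)
  ultimately show ?thesis using low by (cases "j = 0") (auto simp: coeff_digits_poly Nk_0)
qed

definition cubic_poly :: "(nat \<Rightarrow> int) \<Rightarrow> (nat \<Rightarrow> int) \<Rightarrow> nat \<Rightarrow> int poly" where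
  "cubic_poly a x n = digits_poly x n ^ 3 + monom 1 1 * (digits_poly a n * digits_poly x n)"

lemma poly_cubic_poly_3:
  "poly (cubic_poly a x n) 3 = trunc3 x n ^ 3 + 3 * trunc3 a n * trunc3 x n"
  by (simp add: cubic_poly_def poly_digits_poly_3 poly_monom)

definition cubic_coeff :: "(nat \<Rightarrow> int) \<Rightarrow> (nat \<Rightarrow> int) \<Rightarrow> nat \<Rightarrow> int" where
  "cubic_coeff a x j = (if j = 0 then x 0 ^ 3
     else Nk j x + 3 * x 0 ^ 2 * x j + (\<Sum>i\<le>j - 1. a i * x (j - 1 - i)))"

lemma coeff_cubic_poly:
  assumes "j < n" shows "coeff (cubic_poly a x n) j = cubic_coeff a x j"
proof -
  have "coeff (monom 1 1 * (digits_poly a n * digits_poly x n)) j =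
        (if j = 0 then 0 else (\<Sum>i\<le>j - 1. a i * x (j - 1 - i)))"
  proof (cases "j = 0")
    case False
    then have "coeff (monom 1 1 * (digits_poly a n * digits_poly x n)) j =
               coeff (digits_poly a n * digits_poly x n) (j - 1)"
      by (simp add: coeff_monom_mult)
    also have "\<dots> = (\<Sum>i\<le>j - 1. a i * x (j - 1 - i))"
      unfolding coeff_mult using assms by (intro sum.cong) (auto simp: coeff_digits_poly)
    finally show ?thesis using False by simp
  qed (simp add: coeff_monom_mult)
  then show ?thesis using assms by (simp add: cubic_poly_def cubic_coeff_def coeff_cube_digits_poly)
qed

lemma poly_truncation_dvd:
  "(z :: int) ^ n dvd poly p z - (\<Sum>j<n. coeff p j * z ^ j)"
proof (induction n arbitrary: p)
  case 0 then show ?case by simp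
next
  case (Suc n)
  obtain c q where p: "p = pCons c q" by (cases p) auto
  have "poly p z - (\<Sum>j<Suc n. coeff p j * z ^ j) = z * (poly q z - (\<Sum>j<n. coeff q j * z ^ j))"
    unfolding sum.lessThan_Suc_shift using p by (simp add: sum_distrib_left algebra_simps)
  then show ?case using Suc[of q] by (simp add: mult_dvd_mono)
qed

definition digit_lhs :: "(nat \<Rightarrow> int) \<Rightarrow> (nat \<Rightarrow> int) \<Rightarrow> nat \<Rightarrow> int" where
  "digit_lhs a x j = (if j = 0 then x 0 ^ 3 else Lhs a x j 0)"

text \<open>The multiple of 3 in the j-th coefficient of the cube, namely 3 times this value
  (from N_j = x_{j/3}^3 + 3 Nk_quot and from 3 x_0^2 x_j), is carried to digit j + 1; there it
  becomes the paper's N'_{j+1} - x_{(j+1)/3}^3 and the summand x_0^2 x_j.\<close>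
definition digit_shift :: "(nat \<Rightarrow> int) \<Rightarrow> nat \<Rightarrow> int" where
  "digit_shift x j = (if j = 0 then 0 else Nk_quot x j + x 0 ^ 2 * x j)"

lemma Lhs_eq_add: "Lhs a x k m = Lhs a x k 0 + m"
  by (simp add: Lhs_def)

lemma convolution_split_first:
  fixes a x :: "nat \<Rightarrow> int"
  shows "(\<Sum>i\<le>n. a i * x (n - i)) = a 0 * x n + (\<Sum>i\<in>{1..<Suc n}. x (n - i) * a i)"
proof -
  have "(\<Sum>i\<in>{1..<Suc n}. x (n - i) * a i) = (\<Sum>i<n. x (n - Suc i) * a (Suc i))"
    unfolding One_nat_def sum.shift_bounds_Suc_ivl by (simp add: atLeast0LessThan)
  then show ?thesis by (simp add: sum.atMost_shift mult.commute)
qed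

lemma cubic_coeff_regroup:
  "cubic_coeff a x n + digit_shift x (n - 1) = digit_lhs a x n + 3 * digit_shift x n"
proof -
  consider "n = 0" | "n = 1" | "2 \<le> n" by linarith
  then show ?thesis
  proof cases
    case 1 then show ?thesis by (simp add: cubic_coeff_def digit_shift_def digit_lhs_def)
  next
    case 2
    have "Nk 1 x = 3 * Nk_quot x 1" using Nk_eq_cube_digit[of 1 x] by (simp add: cube_digit_def)
    then show ?thesis using 2 by (simp add: cubic_coeff_def digit_shift_def digit_lhs_def Lhs_def)
  next
    case 3
    then obtain l where "n = Suc l" by (cases n) auto
    then show ?thesis
      using 3 Nk_eq_cube_digit[of n x] Nprime_eq[OF 3, of x] convolution_split_first[of a x l]
      by (simp add: cubic_coeff_def digit_shift_def digit_lhs_def Lhs_def algebra_simps)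
  qed
qed

lemma sum_cubic_coeff:
  "(\<Sum>j<n. 3 ^ j * cubic_coeff a x j) = (\<Sum>j<n. 3 ^ j * digit_lhs a x j) + 3 ^ n * digit_shift x (n - 1)"
proof (induction n)
  case 0 then show ?case by (simp add: digit_shift_def)
next
  case (Suc n)
  have "(\<Sum>j<Suc n. 3 ^ j * cubic_coeff a x j) =
        (\<Sum>j<n. 3 ^ j * digit_lhs a x j) + 3 ^ n * (cubic_coeff a x n + digit_shift x (n - 1))"
    using Suc by (simp add: algebra_simps)
  also have "\<dots> = (\<Sum>j<Suc n. 3 ^ j * digit_lhs a x j) + 3 ^ Suc n * digit_shift x n"
    by (simp only: cubic_coeff_regroup) (simp add: algebra_simps)
  finally show ?case by simp
qed

lemma cubic_cong_digit_sum:
  "[trunc3 x n ^ 3 + 3 * trunc3 a n * trunc3 x n = (\<Sum>j<n. 3 ^ j * digit_lhs a x j)] (mod 3 ^ n)"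
proof -
  have "[poly (cubic_poly a x n) 3 = (\<Sum>j<n. coeff (cubic_poly a x n) j * 3 ^ j)] (mod 3 ^ n)"
    using poly_truncation_dvd by (simp add: cong_iff_dvd_diff)
  also have "(\<Sum>j<n. coeff (cubic_poly a x n) j * 3 ^ j) = (\<Sum>j<n. 3 ^ j * cubic_coeff a x j)"
    by (intro sum.cong) (simp_all add: coeff_cubic_poly)
  also have "[\<dots> = (\<Sum>j<n. 3 ^ j * digit_lhs a x j)] (mod 3 ^ n)"
    by (simp add: sum_cubic_coeff cong_iff_dvd_diff)
  finally show ?thesis by (simp add: poly_cubic_poly_3)
qed

lemma is_solution3_iff_dvd:
  "is_solution3 a b x \<longleftrightarrow> (\<forall>n. (3::int) ^ n dvd (\<Sum>j<n. 3 ^ j * (digit_lhs a x j - b j)))"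
proof -
  have diff: "(\<Sum>j<n. 3 ^ j * (digit_lhs a x j - b j)) = (\<Sum>j<n. 3 ^ j * digit_lhs a x j) - trunc3 b n" for n
    by (simp add: trunc3_def right_diff_distrib sum_subtractf mult.commute)
  have "[trunc3 x n ^ 3 + 3 * trunc3 a n * trunc3 x n = trunc3 b n] (mod 3 ^ n) \<longleftrightarrow>
        [(\<Sum>j<n. 3 ^ j * digit_lhs a x j) = trunc3 b n] (mod 3 ^ n)" for n
    using cubic_cong_digit_sum[of x n a] by (meson cong_sym cong_trans)
  with diff show ?thesis by (simp add: is_solution3_def cong_iff_dvd_diff)
qed

lemma digit_sum_eq_carry:
  fixes p :: int
  assumes "c 0 = 0" and "\<And>k. c (Suc k) = (u k + c k) div p" and "\<forall>j<n. p dvd u j + c j"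
  shows "(\<Sum>j<n. p ^ j * u j) = p ^ n * c n"
  using assms(3)
proof (induction n)
  case 0 then show ?case using assms(1) by simp
next
  case (Suc n)
  then have "(\<Sum>j<Suc n. p ^ j * u j) = p ^ n * (u n + c n)" by (simp add: algebra_simps)
  also have "u n + c n = p * c (Suc n)" using Suc.prems assms(2) by simp
  finally show ?case by (simp add: algebra_simps)
qed

lemma power_dvd_digit_sum_iff:
  fixes p :: int
  assumes "p \<noteq> 0" and "c 0 = 0" and "\<And>k. c (Suc k) = (u k + c k) div p"
  shows "(\<forall>n. p ^ n dvd (\<Sum>j<n. p ^ j * u j)) \<longleftrightarrow> (\<forall>k. p dvd u k + c k)"
proof
  assume dvd: "\<forall>n. p ^ n dvd (\<Sum>j<n. p ^ j * u j)"
  show "\<forall>k. p dvd u k + c k"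
  proof
    fix k show "p dvd u k + c k"
    proof (induction k rule: less_induct)
      case (less k)
      then have "(\<Sum>j<Suc k. p ^ j * u j) = p ^ k * (u k + c k)"
        using digit_sum_eq_carry[OF assms(2,3), of k] by (simp add: algebra_simps)
      then have "p ^ k * p dvd p ^ k * (u k + c k)" using dvd[rule_format, of "Suc k"] by (simp add: ac_simps)
      then show ?case using assms(1) by simp
    qed
  qed
next
  assume "\<forall>k. p dvd u k + c k"
  then show "\<forall>n. p ^ n dvd (\<Sum>j<n. p ^ j * u j)"
    using digit_sum_eq_carry[OF assms(2,3)] by simp
qed

lemma Mk_Suc: "Mk a b x (Suc k) = (digit_lhs a x k - b k + Mk a b x k) div 3"
  by (cases k) (simp_all add: digit_lhs_def Lhs_eq_add[of a x _ "Mk a b x _"] algebra_simps)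

text \<open>The equivalence holds for arbitrary integer sequences.\<close>
theorem theorem3p7:
  fixes a b x :: "nat \<Rightarrow> int"
  assumes "digits3 a" and "a 0 \<noteq> 0"
    and "digits3 b" and "b 0 \<noteq> 0"
    and "digits3 x" and "x 0 \<noteq> 0"
    and "\<not> [x 0 ^ 2 + a 0 = 0] (mod 3)"
  shows "is_solution3 a b x \<longleftrightarrow>
           ([x 0 ^ 3 = b 0] (mod 3) \<and>
            (\<forall>k\<ge>1. [Lhs a x k (Mk a b x k) = b k] (mod 3)))"
proof -
  have "is_solution3 a b x \<longleftrightarrow> (\<forall>k. 3 dvd digit_lhs a x k - b k + Mk a b x k)"
    unfolding is_solution3_iff_dvd
    by (rule power_dvd_digit_sum_iff) (simp_all add: Mk_Suc)
  also have "\<dots> \<longleftrightarrow> 3 dvd x 0 ^ 3 - b 0 \<and> (\<forall>k\<ge>1. 3 dvd digit_lhs a x k - b k + Mk a b x k)"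
    by (metis digit_lhs_def Mk.simps(1) add_0_right less_one not_le)
  also have "\<dots> \<longleftrightarrow> [x 0 ^ 3 = b 0] (mod 3) \<and> (\<forall>k\<ge>1. [Lhs a x k (Mk a b x k) = b k] (mod 3))"
    by (simp add: cong_iff_dvd_diff digit_lhs_def Lhs_eq_add[of a x _ "Mk a b x _"] algebra_simps)
  finally show ?thesis .
qed

end
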